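(* Let $A,B\in\mathbb{R}^{m\times n}$ with $m<n$ and $\operatorname{rank}(A)=m$. Let $A_1\in\mathbb{R}^{m\times m}$ be a nonsingular submatrix of $A$ formed by some $m$ columns of $A$, and let $B_1\in\mathbb{R}^{m\times m}$ be the submatrix of $B$ formed by the same column indices. If $\|A_1^{-1}B_1\|_p<1$ for some $1\le p\le\infty$, then for any given $b\in\mathbb{R}^m$ the generalized absolute value equation $Ax-B|x|=b$ has infinitely many solutions $x\in\mathbb{R}^n$.
   Context: $|x|$ denotes the entrywise absolute value. $\|\cdot\|_p$ on matrices denotes the operator norm induced by the vector $p$-norm. *)

theory Defs
  imports "HOL-Analysis.Analysis" "HOL-Library.Extended_Real"
begin

definition vec_pnorm :: "ereal \<Rightarrow> real^'n \<Rightarrow> real" where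
  "vec_pnorm p x =
     (if p = \<infinity> then Max (range (\<lambda>i. \<bar>x $ i\<bar>))
      else (\<Sum>i\<in>UNIV. \<bar>x $ i\<bar> powr real_of_ereal p) powr (1 / real_of_ereal p))"

definition mat_pnorm :: "ereal \<Rightarrow> real^'n^'m \<Rightarrow> real" where
  "mat_pnorm p M = (SUP x\<in>{x. x \<noteq> 0}. vec_pnorm p (M *v x) / vec_pnorm p x)"

definition vabs :: "real^'n \<Rightarrow> real^'n" where
  "vabs x = (\<chi> i. \<bar>x $ i\<bar>)"

definition col_submatrix :: "real^'n^'m \<Rightarrow> ('m \<Rightarrow> 'n) \<Rightarrow> real^'m^'m" where
  "col_submatrix A sel = (\<chi> i j. A $ i $ sel j)"

end

theory Submission
  imports Defs
begin

text \<open>Let \<open>x\<close> carry \<open>y\<close> on the selected columns, \<open>t\<close> on one further column \<open>k\<close>, and zero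
  elsewhere. Then \<open>A x - B |x| = b\<close> becomes the square equation \<open>A\<^sub>1 y - B\<^sub>1 |y| = b - t a\<^sub>k + |t| b\<^sub>k\<close>,
  where \<open>a\<^sub>k\<close> and \<open>b\<^sub>k\<close> are the \<open>k\<close>-th columns of \<open>A\<close> and \<open>B\<close>.
  With \<open>C = A\<^sub>1\<^sup>-\<^sup>1 B\<^sub>1\<close> this is the fixed-point equation \<open>y = d + C |y|\<close>, and since
  \<open>\<parallel>C |y|\<parallel>\<^sub>p \<le> q \<parallel>y\<parallel>\<^sub>p\<close> with \<open>q < 1\<close>, Brouwer's theorem gives a solution on a large
  p-norm ball. So every real \<open>t\<close> occurs as the \<open>k\<close>-th coordinate of a solution.\<close>

lemma ereal_ge_1_cases:
  assumes "1 \<le> p"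
  obtains "p = \<infinity>" | r where "p = ereal r" "1 \<le> r"
  using assms by (cases p) auto

lemma convex_on_powr_nonneg:
  assumes "1 \<le> r"
  shows "convex_on {0::real..} (\<lambda>x. x powr r)"
proof
  fix t x y :: real
  assume t: "0 < t" "t < 1" and xy: "x \<in> {0..}" "y \<in> {0..}" "x < y"
  show "((1 - t) *\<^sub>R x + t *\<^sub>R y) powr r \<le> (1 - t) * x powr r + t * y powr r"
  proof (cases "x = 0")
    case True
    have "(t * y) powr r = t powr r * y powr r"
      using t xy by (simp add: powr_mult)
    also have "\<dots> \<le> t * y powr r"
      using t assms by (intro mult_right_mono powr_le_one_le) auto
    finally show ?thesis using True assms by simp
  next
    case False
    then show ?thesis
      using t xy by (intro convex_onD[OF powr_convex[OF assms]]) auto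
  qed
qed (simp add: convex_real_interval)

lemma vec_pnorm_infinity: "vec_pnorm \<infinity> x = (MAX i. \<bar>x $ i\<bar>)"
  by (simp add: vec_pnorm_def)

lemma vec_pnorm_ereal: "vec_pnorm (ereal r) x = (\<Sum>i\<in>UNIV. \<bar>x $ i\<bar> powr r) powr (1 / r)"
  by (simp add: vec_pnorm_def)

lemma powr_vec_pnorm_ereal:
  assumes "0 < r"
  shows "vec_pnorm (ereal r) x powr r = (\<Sum>i\<in>UNIV. \<bar>x $ i\<bar> powr r)"
  using assms by (simp add: vec_pnorm_ereal powr_powr sum_nonneg)

lemma abs_component_le_vec_pnorm:
  assumes "1 \<le> p"
  shows "\<bar>x $ i\<bar> \<le> vec_pnorm p x"
  using assms
proof (cases rule: ereal_ge_1_cases)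
  case 1
  then show ?thesis by (simp add: vec_pnorm_infinity)
next
  case (2 r)
  have "\<bar>x $ i\<bar> powr r \<le> (\<Sum>i\<in>UNIV. \<bar>x $ i\<bar> powr r)"
    by (rule member_le_sum) auto
  then have "(\<bar>x $ i\<bar> powr r) powr (1 / r) \<le> (\<Sum>i\<in>UNIV. \<bar>x $ i\<bar> powr r) powr (1 / r)"
    using 2 by (intro powr_mono2) auto
  then show ?thesis using 2 by (simp add: vec_pnorm_ereal powr_powr)
qed

lemma vec_pnorm_nonneg: "1 \<le> p \<Longrightarrow> 0 \<le> vec_pnorm p x"
  using abs_component_le_vec_pnorm abs_ge_zero order_trans by blast

lemma vec_pnorm_zero: "1 \<le> p \<Longrightarrow> vec_pnorm p 0 = 0"
  by (cases rule: ereal_ge_1_cases) (auto simp: vec_pnorm_infinity vec_pnorm_ereal)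

lemma vec_pnorm_eq_0_iff:
  assumes "1 \<le> p"
  shows "vec_pnorm p x = 0 \<longleftrightarrow> x = 0"
proof
  show "vec_pnorm p x = 0 \<Longrightarrow> x = 0"
    using abs_component_le_vec_pnorm[OF assms, of x] by (simp add: vec_eq_iff)
qed (simp add: vec_pnorm_zero[OF assms])

lemma vec_pnorm_pos: "1 \<le> p \<Longrightarrow> x \<noteq> 0 \<Longrightarrow> 0 < vec_pnorm p x"
  using vec_pnorm_nonneg vec_pnorm_eq_0_iff by (metis order_le_less)

lemma vec_pnorm_mono:
  assumes "1 \<le> p" "\<And>i. \<bar>x $ i\<bar> \<le> \<bar>y $ i\<bar>"
  shows "vec_pnorm p x \<le> vec_pnorm p y"
  using assms(1)
proof (cases rule: ereal_ge_1_cases)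
  case 1
  show ?thesis
  proof -
    have "\<bar>x $ i\<bar> \<le> (MAX i. \<bar>y $ i\<bar>)" for i
      by (rule order_trans[OF assms(2) Max_ge]) auto
    then show ?thesis using 1 by (simp add: vec_pnorm_infinity)
  qed
next
  case (2 r)
  have "(\<Sum>i\<in>UNIV. \<bar>x $ i\<bar> powr r) \<le> (\<Sum>i\<in>UNIV. \<bar>y $ i\<bar> powr r)"
    using assms(2) 2 by (intro sum_mono powr_mono2) auto
  then show ?thesis
    using 2 by (simp add: vec_pnorm_ereal) (intro powr_mono2, auto intro: sum_nonneg)
qed

lemma vec_pnorm_vabs: "1 \<le> p \<Longrightarrow> vec_pnorm p (vabs x) = vec_pnorm p x"
  by (rule antisym) (auto intro!: vec_pnorm_mono simp: vabs_def)

lemma vec_pnorm_scaleR: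
  assumes "1 \<le> p"
  shows "vec_pnorm p (c *\<^sub>R x) = \<bar>c\<bar> * vec_pnorm p x"
  using assms
proof (cases rule: ereal_ge_1_cases)
  case 1
  have "mono ((*) \<bar>c\<bar>)" by (simp add: mono_def mult_left_mono)
  then have "\<bar>c\<bar> * (MAX i. \<bar>x $ i\<bar>) = (MAX i. \<bar>c\<bar> * \<bar>x $ i\<bar>)"
    by (subst mono_Max_commute) (auto simp: image_image)
  then show ?thesis using 1 by (simp add: vec_pnorm_infinity abs_mult)
next
  case (2 r)
  have "(\<Sum>i\<in>UNIV. \<bar>c * x $ i\<bar> powr r) = \<bar>c\<bar> powr r * (\<Sum>i\<in>UNIV. \<bar>x $ i\<bar> powr r)"
    by (simp add: abs_mult powr_mult sum_distrib_left)
  then show ?thesis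
    using 2 by (simp add: vec_pnorm_ereal powr_mult powr_powr sum_nonneg)
qed

lemma sum_powr_normalized_vec_pnorm:
  assumes "1 \<le> r" "x \<noteq> 0"
  shows "(\<Sum>i\<in>UNIV. (\<bar>x $ i\<bar> / vec_pnorm (ereal r) x) powr r) = 1"
proof -
  have "0 < vec_pnorm (ereal r) x powr r"
    using vec_pnorm_pos[OF _ assms(2), of "ereal r"] assms(1) by simp
  then show ?thesis
    using assms(1) by (simp add: powr_divide powr_vec_pnorm_ereal flip: sum_divide_distrib)
qed

text \<open>Convexity of \<open>powr\<close> at the normalised values \<open>u / a\<close> and \<open>v / b\<close>; summed over the
  coordinates with \<open>a\<close>, \<open>b\<close> the norms of two vectors, this yields Minkowski's inequality.\<close>
lemma powr_add_le_convex_comb: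
  fixes a b u v r :: real
  assumes "0 < a" "0 < b" "0 \<le> u" "0 \<le> v" "1 \<le> r"
  shows "(u + v) powr r \<le> (a + b) powr r * (a / (a + b) * (u / a) powr r + b / (a + b) * (v / b) powr r)"
proof -
  define l where "l = a / (a + b)"
  have l: "0 \<le> l" "l \<le> 1" "1 - l = b / (a + b)"
    unfolding l_def using assms by (auto simp: field_simps)
  have "u + v = (a + b) * (l * (u / a) + (1 - l) * (v / b))"
    using assms unfolding l(3) by (simp add: l_def distrib_left)
  then have "(u + v) powr r = (a + b) powr r * (l * (u / a) + (1 - l) * (v / b)) powr r"
    using assms l by (simp add: powr_mult)
  also have "\<dots> \<le> (a + b) powr r * (l * (u / a) powr r + (1 - l) * (v / b) powr r)"
    using convex_onD[OF convex_on_powr_nonneg[OF assms(5)], of "1 - l" "u / a" "v / b"] assms l(1,2)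
    by (intro mult_left_mono) auto
  finally show ?thesis
    unfolding l(3) by (simp add: l_def)
qed

lemma vec_pnorm_triangle:
  assumes "1 \<le> p"
  shows "vec_pnorm p (x + y) \<le> vec_pnorm p x + vec_pnorm p y"
  using assms
proof (cases rule: ereal_ge_1_cases)
  case 1
  have "\<bar>x $ i + y $ i\<bar> \<le> vec_pnorm p x + vec_pnorm p y" for i
    using abs_triangle_ineq[of "x $ i" "y $ i"] abs_component_le_vec_pnorm[OF assms]
    by (smt (verit))
  then show ?thesis using 1 by (simp add: vec_pnorm_infinity)
next
  case (2 r)
  show ?thesis
  proof (cases "x = 0 \<or> y = 0")
    case True
    then show ?thesis by (auto simp: vec_pnorm_zero[OF assms])
  next
    case False
    define a b where "a = vec_pnorm p x" and "b = vec_pnorm p y"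
    have ab: "0 < a" "0 < b"
      unfolding a_def b_def using False vec_pnorm_pos[OF assms] by auto
    have "(\<Sum>i\<in>UNIV. \<bar>(x + y) $ i\<bar> powr r)
        \<le> (\<Sum>i\<in>UNIV. (a + b) powr r *
              (a / (a + b) * (\<bar>x $ i\<bar> / a) powr r + b / (a + b) * (\<bar>y $ i\<bar> / b) powr r))"
    proof (rule sum_mono)
      fix i
      have "\<bar>(x + y) $ i\<bar> powr r \<le> (\<bar>x $ i\<bar> + \<bar>y $ i\<bar>) powr r"
        using 2 abs_triangle_ineq[of "x $ i" "y $ i"] by (intro powr_mono2) auto
      also have "\<dots> \<le> (a + b) powr r *
              (a / (a + b) * (\<bar>x $ i\<bar> / a) powr r + b / (a + b) * (\<bar>y $ i\<bar> / b) powr r)"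
        using ab 2 by (intro powr_add_le_convex_comb) auto
      finally show "\<bar>(x + y) $ i\<bar> powr r \<le> \<dots>" .
    qed
    also have "\<dots> = (a + b) powr r * (a / (a + b) * (\<Sum>i\<in>UNIV. (\<bar>x $ i\<bar> / a) powr r)
                           + b / (a + b) * (\<Sum>i\<in>UNIV. (\<bar>y $ i\<bar> / b) powr r))"
      by (simp only: sum_distrib_left sum.distrib[symmetric])
    also have "\<dots> = (a + b) powr r"
      using False ab 2 by (simp add: a_def b_def sum_powr_normalized_vec_pnorm add_divide_distrib[symmetric])
    finally have "vec_pnorm p (x + y) powr r \<le> (a + b) powr r"
      using 2 by (simp add: powr_vec_pnorm_ereal)
    then show ?thesis
      using 2 ab powr_less_mono2[of r "a + b" "vec_pnorm p (x + y)"]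
      by (force simp: a_def b_def)
  qed
qed

lemma norm_le_vec_pnorm:
  assumes "1 \<le> p"
  shows "norm (z :: real^'n) \<le> real CARD('n) * vec_pnorm p z"
proof -
  have "norm z \<le> (\<Sum>i\<in>UNIV. \<bar>z $ i\<bar>)" by (rule norm_le_l1_cart)
  also have "\<dots> \<le> (\<Sum>i\<in>(UNIV::'n set). vec_pnorm p z)"
    by (intro sum_mono abs_component_le_vec_pnorm[OF assms])
  finally show ?thesis by simp
qed

lemma vec_pnorm_le_norm:
  assumes "1 \<le> p"
  shows "vec_pnorm p (z :: real^'n) \<le> real CARD('n) * norm z"
  using assms
proof (cases rule: ereal_ge_1_cases)
  case 1
  have "vec_pnorm p z \<le> norm z"
    using 1 by (simp add: vec_pnorm_infinity component_le_norm_cart)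
  also have "\<dots> \<le> real CARD('n) * norm z"
    by (simp add: mult_le_cancel_right1 Suc_le_eq)
  finally show ?thesis .
next
  case (2 r)
  have "(\<Sum>i\<in>UNIV. \<bar>z $ i\<bar> powr r) \<le> (\<Sum>i\<in>(UNIV::'n set). norm z powr r)"
    using 2 by (intro sum_mono powr_mono2) (auto simp: component_le_norm_cart)
  then have "vec_pnorm p z \<le> (real CARD('n) * norm z powr r) powr (1 / r)"
    using 2 by (simp add: vec_pnorm_ereal) (intro powr_mono2, auto intro: sum_nonneg)
  also have "\<dots> = real CARD('n) powr (1 / r) * norm z"
    using 2 by (simp add: powr_mult powr_powr)
  also have "\<dots> \<le> real CARD('n) powr 1 * norm z"
    using 2 by (intro mult_right_mono powr_mono) (auto simp: Suc_le_eq)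
  finally show ?thesis by simp
qed

lemma continuous_on_vec_pnorm:
  assumes "1 \<le> p"
  shows "continuous_on S (vec_pnorm p :: real^'n \<Rightarrow> real)"
proof (rule lipschitz_on_continuous_on)
  show "lipschitz_on (real CARD('n)) S (vec_pnorm p)"
  proof (rule lipschitz_onI)
    fix x y :: "real^'n"
    have "vec_pnorm p x \<le> vec_pnorm p (x - y) + vec_pnorm p y"
      using vec_pnorm_triangle[OF assms, of "x - y" y] by simp
    moreover have "vec_pnorm p y \<le> vec_pnorm p (x - y) + vec_pnorm p x"
      using vec_pnorm_triangle[OF assms, of "y - x" x] vec_pnorm_scaleR[OF assms, of "-1" "x - y"]
      by simp
    ultimately have "dist (vec_pnorm p x) (vec_pnorm p y) \<le> vec_pnorm p (x - y)"
      by (simp add: dist_real_def)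
    also have "\<dots> \<le> real CARD('n) * dist x y"
      using vec_pnorm_le_norm[OF assms] by (simp add: dist_norm)
    finally show "dist (vec_pnorm p x) (vec_pnorm p y) \<le> real CARD('n) * dist x y" .
  qed simp
qed

lemma vec_pnorm_matrix_vector_mult_bounded:
  assumes "1 \<le> p"
  obtains K where "\<And>z. vec_pnorm p ((M :: real^'n^'m) *v z) \<le> K * vec_pnorm p z"
proof -
  obtain L where L: "\<And>z. norm (M *v z) \<le> norm z * L" "0 < L"
    using bounded_linear.pos_bounded[OF matrix_vector_mul_bounded_linear] by blast
  have "vec_pnorm p (M *v z) \<le> real CARD('m) * L * real CARD('n) * vec_pnorm p z" for z
  proof -
    have "vec_pnorm p (M *v z) \<le> real CARD('m) * (norm z * L)"
      using vec_pnorm_le_norm[OF assms, of "M *v z"] L(1)[of z] by (simp add: order_trans)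
    also have "\<dots> \<le> real CARD('m) * ((real CARD('n) * vec_pnorm p z) * L)"
      using norm_le_vec_pnorm[OF assms, of z] L(2) by (simp add: mult_right_mono)
    finally show ?thesis by (simp add: ac_simps)
  qed
  then show ?thesis by (rule that)
qed

lemma vec_pnorm_le_mat_pnorm:
  assumes "1 \<le> p"
  shows "vec_pnorm p ((M :: real^'n^'m) *v z) \<le> mat_pnorm p M * vec_pnorm p z"
proof (cases "z = 0")
  case True
  then show ?thesis by (simp add: vec_pnorm_zero[OF assms])
next
  case False
  obtain K where K: "\<And>z. vec_pnorm p (M *v z) \<le> K * vec_pnorm p z"
    using vec_pnorm_matrix_vector_mult_bounded[OF assms] by blast
  have "bdd_above ((\<lambda>x. vec_pnorm p (M *v x) / vec_pnorm p x) ` {x. x \<noteq> 0})"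
    using K by (intro bdd_aboveI2[of _ _ K]) (simp add: pos_divide_le_eq vec_pnorm_pos[OF assms])
  then have "vec_pnorm p (M *v z) / vec_pnorm p z \<le> mat_pnorm p M"
    unfolding mat_pnorm_def using False by (intro cSUP_upper) auto
  then show ?thesis
    using vec_pnorm_pos[OF assms False] by (simp add: divide_le_eq mult.commute)
qed

lemma vec_pnorm_convex_comb_le:
  assumes "1 \<le> p" "0 \<le> u" "0 \<le> v" "u + v = 1" "vec_pnorm p x \<le> R" "vec_pnorm p y \<le> R"
  shows "vec_pnorm p (u *\<^sub>R x + v *\<^sub>R y) \<le> R"
proof -
  have "vec_pnorm p (u *\<^sub>R x + v *\<^sub>R y) \<le> u * vec_pnorm p x + v * vec_pnorm p y"
    using vec_pnorm_triangle[OF assms(1), of "u *\<^sub>R x" "v *\<^sub>R y"] assms(2,3)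
    by (simp add: vec_pnorm_scaleR[OF assms(1)])
  also have "\<dots> \<le> u * R + v * R"
    using assms by (intro add_mono mult_left_mono) auto
  finally show ?thesis
    using assms(4) by (simp add: distrib_right[symmetric])
qed

lemma fixed_point_vabs_affine:
  fixes C :: "real^'m^'m"
  assumes p: "1 \<le> p" and q: "0 \<le> q" "q < 1"
    and C: "\<And>z. vec_pnorm p (C *v z) \<le> q * vec_pnorm p z"
  obtains y where "d + C *v vabs y = y"
proof -
  define R where "R = vec_pnorm p d / (1 - q)"
  define K where "K = {y :: real^'m. vec_pnorm p y \<le> R}"
  have "vec_pnorm p d + q * R = R"
    unfolding R_def using q by (simp add: field_simps)
  have "bounded K"
    unfolding bounded_iff K_def
    by (rule exI[of _ "real CARD('m) * R"]) (auto intro: order_trans[OF norm_le_vec_pnorm[OF p]])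
  moreover have "closed K"
    unfolding K_def by (intro closed_Collect_le continuous_on_vec_pnorm[OF p] continuous_on_const)
  moreover have "convex K"
    unfolding convex_def K_def by (auto intro: vec_pnorm_convex_comb_le[OF p])
  moreover have "0 \<in> K"
    unfolding K_def R_def using q by (simp add: vec_pnorm_zero[OF p] vec_pnorm_nonneg[OF p])
  moreover have "continuous_on K (\<lambda>y. d + C *v vabs y)"
    unfolding vabs_def
    by (intro continuous_intros bounded_linear.continuous_on[OF matrix_vector_mul_bounded_linear])
  moreover have "d + C *v vabs y \<in> K" if "y \<in> K" for y
  proof -
    have "vec_pnorm p (d + C *v vabs y) \<le> vec_pnorm p d + q * vec_pnorm p y"
      using vec_pnorm_triangle[OF p, of d "C *v vabs y"] C[of "vabs y"]
      by (simp add: vec_pnorm_vabs[OF p])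
    also have "\<dots> \<le> vec_pnorm p d + q * R"
      using that q by (simp add: K_def mult_left_mono)
    finally show ?thesis
      using \<open>vec_pnorm p d + q * R = R\<close> by (simp add: K_def)
  qed
  ultimately show ?thesis
    using brouwer[of K "\<lambda>y. d + C *v vabs y"] that by (auto simp: compact_eq_bounded_closed)
qed

lemma matrix_mul_matrix_inv:
  assumes "invertible (A :: 'a::semiring_1^'n^'m)"
  shows "A ** matrix_inv A = mat 1"
  using assms unfolding invertible_def matrix_inv_def by (rule someI_ex[THEN conjunct1])

lemma square_gave_solvable:
  fixes A B :: "real^'m^'m"
  assumes "1 \<le> p" "invertible A" "mat_pnorm p (matrix_inv A ** B) < 1"
  obtains y where "A *v y - B *v vabs y = c"
proof -
  define C where "C = matrix_inv A ** B"
  define q where "q = max (mat_pnorm p C) 0"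
  have "vec_pnorm p (C *v z) \<le> q * vec_pnorm p z" for z
  proof -
    have "vec_pnorm p (C *v z) \<le> mat_pnorm p C * vec_pnorm p z"
      by (rule vec_pnorm_le_mat_pnorm[OF assms(1)])
    also have "\<dots> \<le> q * vec_pnorm p z"
      unfolding q_def by (intro mult_right_mono vec_pnorm_nonneg[OF assms(1)]) simp
    finally show ?thesis .
  qed
  moreover have "0 \<le> q" "q < 1"
    using assms(3) unfolding q_def C_def by auto
  ultimately obtain y where y: "matrix_inv A *v c + C *v vabs y = y"
    using fixed_point_vabs_affine[OF assms(1)] by blast
  have "A *v y = c + B *v vabs y"
    by (subst y[symmetric])
      (simp add: C_def matrix_vector_right_distrib matrix_vector_mul_assoc matrix_mul_assoc
        matrix_mul_matrix_inv[OF assms(2)])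
  then show ?thesis
    using that[of y] by (simp add: algebra_simps)
qed

definition vec_extend :: "('m \<Rightarrow> 'n) \<Rightarrow> 'n \<Rightarrow> real^'m \<Rightarrow> real \<Rightarrow> real^'n" where
  "vec_extend sel k y t = (\<chi> j. if j \<in> range sel then y $ inv sel j else if j = k then t else 0)"

lemma vec_extend_nth_free: "k \<notin> range sel \<Longrightarrow> vec_extend sel k y t $ k = t"
  by (simp add: vec_extend_def)

lemma vabs_vec_extend: "vabs (vec_extend sel k y t) = vec_extend sel k (vabs y) \<bar>t\<bar>"
  by (simp add: vec_extend_def vabs_def vec_eq_iff)

lemma matrix_vector_mult_vec_extend:
  fixes M :: "real^'n^'m" and sel :: "'m \<Rightarrow> 'n"
  assumes "inj sel" "k \<notin> range sel"
  shows "M *v vec_extend sel k y t = col_submatrix M sel *v y + t *\<^sub>R column k M"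
proof -
  have "(M *v vec_extend sel k y t) $ i = (col_submatrix M sel *v y + t *\<^sub>R column k M) $ i" for i
  proof -
    define g where "g j = M $ i $ j * vec_extend sel k y t $ j" for j
    have "(\<Sum>j\<in>UNIV. g j) = (\<Sum>j\<in>UNIV - range sel. g j) + (\<Sum>j\<in>range sel. g j)"
      by (rule sum.subset_diff) auto
    also have "(\<Sum>j\<in>UNIV - range sel. g j) = (\<Sum>j\<in>UNIV - range sel. if j = k then M $ i $ k * t else 0)"
      by (rule sum.cong) (auto simp: g_def vec_extend_def)
    also have "\<dots> = t * M $ i $ k"
      using assms(2) by simp
    also have "(\<Sum>j\<in>range sel. g j) = (\<Sum>l\<in>UNIV. M $ i $ sel l * y $ l)"
      using assms(1) by (simp add: sum.reindex g_def vec_extend_def)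
    finally show ?thesis
      by (simp add: g_def matrix_vector_mult_def col_submatrix_def column_def)
  qed
  then show ?thesis by (simp add: vec_eq_iff)
qed

lemma exists_not_in_range_of_card_less:
  fixes sel :: "'m::finite \<Rightarrow> 'n"
  assumes "CARD('m) < CARD('n)"
  obtains k where "k \<notin> range sel"
proof -
  have "card (range sel) \<le> CARD('m)"
    by (rule card_image_le) simp
  then have "card (range sel) < CARD('n)"
    using assms by linarith
  then have "range sel \<noteq> UNIV" by auto
  then show ?thesis using that by blast
qed

theorem theorem3p2:
  fixes A B :: "real^'n^'m" and sel :: "'m \<Rightarrow> 'n" and p :: ereal and b :: "real^'m"
  assumes "CARD('m) < CARD('n)"
    and "rank A = CARD('m)"
    and "inj sel"
    and "invertible (col_submatrix A sel)"
    and "1 \<le> p"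
    and "mat_pnorm p (matrix_inv (col_submatrix A sel) ** col_submatrix B sel) < 1"
  shows "infinite {x :: real^'n. A *v x - B *v vabs x = b}"
proof -
  obtain k where k: "k \<notin> range sel"
    using exists_not_in_range_of_card_less[OF assms(1)] .
  let ?S = "{x :: real^'n. A *v x - B *v vabs x = b}"
  have "t \<in> (\<lambda>x. x $ k) ` ?S" for t
  proof -
    obtain y where y: "col_submatrix A sel *v y - col_submatrix B sel *v vabs y
                      = b - t *\<^sub>R column k A + \<bar>t\<bar> *\<^sub>R column k B"
      using square_gave_solvable[OF assms(5,4,6)] .
    have "vec_extend sel k y t \<in> ?S"
      using y by (simp add: vabs_vec_extend matrix_vector_mult_vec_extend[OF assms(3) k] algebra_simps)
    then show ?thesis
      using vec_extend_nth_free[OF k] by (intro image_eqI[of _ _ "vec_extend sel k y t"]) auto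
  qed
  then have "(\<lambda>x. x $ k) ` ?S = UNIV" by blast
  then show ?thesis
    using infinite_UNIV_char_0[where 'a=real] finite_imageI[of ?S "\<lambda>x. x $ k"] by auto
qed

end
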